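(* Let $C\ge2$, $\boldsymbol{M}^\star=\sqrt{\frac{C}{C-1}}\left(\boldsymbol{I}-\frac1C\mathbf{1}\mathbf{1}^\top\right)\in\mathbb{R}^{C\times C}$ with columns $\boldsymbol{\mu}^\star_1,\dots,\boldsymbol{\mu}^\star_C$. For $c\ne c'$ let $\mathcal{K}_{c,c'}=\{\boldsymbol{z}\in\mathbb{R}^C:\ (\boldsymbol{M}^\star(\boldsymbol{\mu}^\star_c+\boldsymbol{z}))(c')\ge(\boldsymbol{M}^\star(\boldsymbol{\mu}^\star_c+\boldsymbol{z}))(c)\}$, where $\boldsymbol{v}(k)$ denotes the $k$-th coordinate of $\boldsymbol{v}$, and let $\boldsymbol{z}^\star_{c,c'}$ be a minimizer of $\frac12\|\boldsymbol{z}\|_2^2$ over $\boldsymbol{z}\in\mathcal{K}_{c,c'}$. Then for all $c\ne c'$, $$\|\boldsymbol{z}^\star_{c,c'}\|_2=\frac12\|\boldsymbol{\mu}^\star_c-\boldsymbol{\mu}^\star_{c'}\|_2.$$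
   Context: $\mathbf{1}$ denotes the all-ones vector in $\mathbb{R}^C$. The set $\mathcal{K}_{c,c'}$ is the set of noise vectors $\boldsymbol{z}$ for which the linear classifier with weight matrix $\boldsymbol{M}^\star$ and zero bias scores class $c'$ at least as high as class $c$ on the input $\boldsymbol{\mu}^\star_c+\boldsymbol{z}$. *)

theory Defs
  imports "HOL-Analysis.Analysis"
begin

definition Mstar :: "real ^ 'n ^ 'n" where
  "Mstar = (\<chi> i j. sqrt (real CARD('n) / (real CARD('n) - 1)) *
              ((if i = j then 1 else 0) - 1 / real CARD('n)))"

definition mustar :: "'n \<Rightarrow> real ^ 'n" where
  "mustar c = column c Mstar"

definition Kset :: "'n \<Rightarrow> 'n \<Rightarrow> (real ^ 'n) set" where
  "Kset c c' = {z. (Mstar *v (mustar c + z)) $ c' \<ge> (Mstar *v (mustar c + z)) $ c}"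

end

theory Submission
  imports Defs
begin

text \<open>
  Writing \<open>s = sqrt (C / (C - 1))\<close>, the matrix \<open>M\<^sup>\<star>\<close> acts as \<open>s\<close> times the projection onto
  the sum-zero hyperplane, so it preserves the order of any two coordinates. Hence \<open>Kset c c'\<close>
  is the half-space \<open>z(c') - z(c) \<ge> s\<close>, whose least-norm point has norm \<open>s / sqrt 2\<close>
  by Cauchy-Schwarz. On the other hand \<open>\<mu>\<^sub>c - \<mu>\<^sub>c\<^sub>' = s (e\<^sub>c - e\<^sub>c\<^sub>')\<close> has norm \<open>s sqrt 2\<close>.
\<close>

lemma halfspace_least_norm:
  fixes u z :: "'a::real_inner"
  assumes "u \<noteq> 0" and "0 \<le> d" and "d \<le> inner u z"
    and least: "\<And>w. d \<le> inner u w \<Longrightarrow> norm z \<le> norm w"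
  shows "norm z = d / norm u"
proof (rule antisym)
  have nu: "norm u > 0" using assms(1) by simp
  define w :: 'a where "w = (d / (norm u)\<^sup>2) *\<^sub>R u"
  have "inner u w = d" using nu by (simp add: w_def power2_norm_eq_inner)
  then have "norm z \<le> norm w" by (intro least) simp
  also have "norm w = d / norm u"
    using nu assms(2) by (simp add: w_def power2_eq_square)
  finally show "norm z \<le> d / norm u" .
next
  have "d \<le> norm u * norm z"
    using assms(3) norm_cauchy_schwarz[of u z] by linarith
  then show "d / norm u \<le> norm z"
    using assms(1) by (simp add: divide_le_eq mult.commute)
qed

lemma norm_axis_diff:
  assumes "a \<noteq> b"
  shows "norm (axis a 1 - axis b (1::real) :: real ^ 'n) = sqrt 2"
  using assms by (simp add: norm_eq_sqrt_inner inner_diff inner_axis_axis)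

lemma Mstar_mult_vec_nth:
  fixes v :: "real ^ 'n"
  shows "(Mstar *v v) $ i
    = sqrt (real CARD('n) / (real CARD('n) - 1)) * (v $ i - (\<Sum>j\<in>UNIV. v $ j) / real CARD('n))"
proof -
  let ?s = "sqrt (real CARD('n) / (real CARD('n) - 1))"
  have "(Mstar *v v) $ i = (\<Sum>j\<in>UNIV. ?s * ((if i = j then 1 else 0) - 1 / real CARD('n)) * v $ j)"
    by (simp add: Mstar_def matrix_vector_mult_def)
  also have "\<dots> = (\<Sum>j\<in>UNIV. ?s * ((if i = j then v $ j else 0) - v $ j / real CARD('n)))"
    by (intro sum.cong) (auto simp: algebra_simps)
  also have "\<dots> = ?s * (v $ i - (\<Sum>j\<in>UNIV. v $ j) / real CARD('n))"
    by (simp add: sum_distrib_left[symmetric] sum_subtractf sum_divide_distrib)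
  finally show ?thesis .
qed

lemma mustar_nth:
  fixes c k :: "'n::finite"
  shows   "mustar c $ k
    = sqrt (real CARD('n) / (real CARD('n) - 1)) * ((if k = c then 1 else 0) - 1 / real CARD('n))"
  by (simp add: mustar_def column_def Mstar_def)

lemma mustar_diff:
  fixes c c' :: "'n::finite"
  shows   "mustar c - mustar c' = sqrt (real CARD('n) / (real CARD('n) - 1)) *\<^sub>R (axis c 1 - axis c' (1::real))"
  by (simp add: vec_eq_iff mustar_nth axis_def algebra_simps)

lemma Kset_eq_halfspace:
  fixes c c' :: "'n::finite"
  assumes "c \<noteq> c'"
  shows "Kset c c'
    = {z. sqrt (real CARD('n) / (real CARD('n) - 1)) \<le> inner (axis c' 1 - axis c 1) z}"
proof -
  let ?s = "sqrt (real CARD('n) / (real CARD('n) - 1))"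
  have "card {c, c'} \<le> CARD('n)" by (rule card_mono) auto
  then have "CARD('n) \<ge> 2" using assms by simp
  then have s_pos: "?s > 0" by simp
  have "z \<in> Kset c c' \<longleftrightarrow> (mustar c + z) $ c \<le> (mustar c + z) $ c'" for z
    using s_pos by (simp add: Kset_def Mstar_mult_vec_nth)
  also have "\<dots> z \<longleftrightarrow> ?s \<le> z $ c' - z $ c" for z
    using assms by (simp add: mustar_nth algebra_simps)
  finally show ?thesis
    by (auto simp: inner_diff_left inner_axis')
qed

theorem lemma12:
  fixes c c' :: "'n::finite" and z :: "real ^ 'n"
  assumes "CARD('n) \<ge> 2"
    and "c \<noteq> c'"
    and "z \<in> Kset c c'"
    and "\<forall>w \<in> Kset c c'. (1/2) * (norm z)^2 \<le> (1/2) * (norm w)^2"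
  shows "norm z = (1/2) * norm (mustar c - mustar c')"
proof -
  define s where "s = sqrt (real CARD('n) / (real CARD('n) - 1))"
  define u :: "real ^ 'n" where "u = axis c' 1 - axis c 1"
  have K: "Kset c c' = {w. s \<le> inner u w}"
    using assms(2) by (simp add: Kset_eq_halfspace s_def u_def)
  have s_nonneg: "0 \<le> s" using assms(1) by (simp add: s_def)
  have norm_u: "norm u = sqrt 2"
    using assms(2) by (simp add: u_def norm_axis_diff)
  have "norm z = s / norm u"
  proof (rule halfspace_least_norm)
    show "u \<noteq> 0" using norm_u by auto
    show "0 \<le> s" by (fact s_nonneg)
    show "s \<le> inner u z" using assms(3) K by blast
    show "norm z \<le> norm w" if "s \<le> inner u w" for w
      using assms(4) that K by auto
  qed
  moreover have "norm (mustar c - mustar c') = s * norm u"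
    using assms(2) s_nonneg norm_u by (simp add: mustar_diff norm_axis_diff s_def[symmetric])
  moreover have "s / sqrt 2 = 1/2 * (s * sqrt 2)"
    by (simp add: field_simps flip: mult.assoc)
  ultimately show ?thesis
    using norm_u by simp
qed

end
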